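(* Let $k\in\mathbb{N}$, $x\ge1$ and $V\ge x^{1/k}$. Then for every $n\in\mathbb{N}$ with $n\le x$, \[ \mathbf{1}_{\mathbb{P}}(n)=\sum_{j=1}^k(-1)^{j-1}\binom kj\big(\mu_{\le V}^{*j}*\mathbf{1}^{*(j-1)}*\omega\big)(n). \]
   Context: $\mathbf{1}_{\mathbb{P}}$ is the indicator function of the primes; $\mu$ is the Möbius function and $\mu_{\le V}(n):=\mu(n)$ if $n\le V$ and $0$ otherwise; $\mathbf{1}(n)=1$ for all $n$; $\omega(n)$ is the number of distinct prime divisors of $n$. $*$ is Dirichlet convolution, $g^{*j}$ is the $j$-fold convolution of $g$ with itself, and $g^{*0}$ is the identity $\delta$ ($\delta(1)=1$, $\delta(n)=0$ for $n>1$). *)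

theory Defs
  imports "HOL-Computational_Algebra.Computational_Algebra"
begin

text \<open>Arithmetic functions are functions nat \<Rightarrow> int, meaningful on positive integers.\<close>

definition dconv :: "(nat \<Rightarrow> int) \<Rightarrow> (nat \<Rightarrow> int) \<Rightarrow> nat \<Rightarrow> int" (infixl "\<star>" 70) where
  "dconv f g n = (\<Sum>d \<in> {d. d dvd n}. f d * g (n div d))"

definition dirichlet_delta :: "nat \<Rightarrow> int" where
  "dirichlet_delta n = (if n = 1 then 1 else 0)"

fun dpow :: "(nat \<Rightarrow> int) \<Rightarrow> nat \<Rightarrow> nat \<Rightarrow> int" where
  "dpow g 0 = dirichlet_delta"
| "dpow g (Suc j) = dconv g (dpow g j)"

definition moebius :: "nat \<Rightarrow> int" where
  "moebius n = (if n = 0 then 0 else if squarefree n then (-1) ^ card (prime_factors n) else 0)"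

definition moebius_le :: "real \<Rightarrow> nat \<Rightarrow> int" where
  "moebius_le V n = (if real n \<le> V then moebius n else 0)"

definition one_fn :: "nat \<Rightarrow> int" where
  "one_fn n = 1"

definition omega_fn :: "nat \<Rightarrow> int" where
  "omega_fn n = int (card (prime_factors n))"

definition prime_ind :: "nat \<Rightarrow> int" where
  "prime_ind n = (if prime n then 1 else 0)"

end

theory Submission
  imports Defs
begin

(* Work in the ring of arithmetic functions under Dirichlet convolution, where mu is the
   inverse of 1 and omega = 1 * 1_P.  Put L = mu_{<=V} and G = mu - L, so that
   1 - L * 1 = G * 1.  The binomial theorem then gives
     sum_{j=1..k} (-1)^(j-1) (k choose j) L^j * 1^(j-1) * omega = 1_P - G^k * 1^k * 1_P.
   Since G vanishes on [1, V], its k-th power vanishes on [1, V^k], which contains [1, x];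
   hence the correction term vanishes at every n <= x. *)

lemma dconv_0 [simp]: "(f \<star> g) 0 = 0"
  by (simp add: dconv_def)

lemma dconv_cong_pos:
  assumes "\<And>m. m > 0 \<Longrightarrow> f m = f' m" "\<And>m. m > 0 \<Longrightarrow> g m = g' m"
  shows "(f \<star> g) n = (f' \<star> g') n"
proof (cases "n = 0")
  case False
  show ?thesis unfolding dconv_def
  proof (rule sum.cong)
    fix d assume "d \<in> {d. d dvd n}"
    then have "d > 0" "n div d > 0"
      using False by (auto intro: Nat.gr0I simp: dvd_div_eq_0_iff)
    then show "f d * g (n div d) = f' d * g' (n div d)"
      using assms by simp
  qed simp
qed simp

lemma dconv_commute: "(f \<star> g) n = (g \<star> f) n"
proof (cases "n = 0")
  case False
  show ?thesis unfolding dconv_def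
    by (rule sum.reindex_bij_witness[where i="\<lambda>d. n div d" and j="\<lambda>d. n div d"])
       (use False in \<open>auto simp: dvd_div_eq_0_iff intro: dvd_div_eq_mult\<close>)
qed simp

lemma bij_betw_divisor_pairs:
  fixes n :: nat
  assumes "n \<noteq> 0"
  shows "bij_betw (\<lambda>(e, c). (e * c, e))
           (SIGMA e:{e. e dvd n}. {c. c dvd n div e}) (SIGMA d:{d. d dvd n}. {e. e dvd d})"
proof (rule bij_betw_byWitness[where f' = "\<lambda>(d, e). (e, d div e)"])
  show "\<forall>a\<in>SIGMA e:{e. e dvd n}. {c. c dvd n div e}. (\<lambda>(d, e). (e, d div e)) ((\<lambda>(e, c). (e * c, e)) a) = a"
    using assms by (auto intro: Nat.gr0I)
  show "\<forall>a\<in>SIGMA d:{d. d dvd n}. {e. e dvd d}. (\<lambda>(e, c). (e * c, e)) ((\<lambda>(d, e). (e, d div e)) a) = a"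
    by auto
  show "(\<lambda>(e, c). (e * c, e)) ` (SIGMA e:{e. e dvd n}. {c. c dvd n div e})
          \<subseteq> (SIGMA d:{d. d dvd n}. {e. e dvd d})"
    using assms by (auto simp: dvd_div_iff_mult mult.commute intro: Nat.gr0I)
  show "(\<lambda>(d, e). (e, d div e)) ` (SIGMA d:{d. d dvd n}. {e. e dvd d})
          \<subseteq> (SIGMA e:{e. e dvd n}. {c. c dvd n div e})"
    by (auto intro: dvd_trans div_dvd_div)
qed

lemma dconv_assoc: "((f \<star> g) \<star> h) n = (f \<star> (g \<star> h)) n"
proof (cases "n = 0")
  case False
  have fin: "finite {d. d dvd m}" if "m dvd n" for m :: nat
    using False that by (auto intro: Nat.gr0I)
  have fin_quot: "finite {c. c dvd n div e}" if "e dvd n" for e :: nat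
    using that by (intro fin) (auto elim!: dvdE)
  have "((f \<star> g) \<star> h) n = (\<Sum>(d, e)\<in>(SIGMA d:{d. d dvd n}. {e. e dvd d}). f e * g (d div e) * h (n div d))"
    unfolding dconv_def using False
    by (simp add: sum_distrib_right sum.Sigma fin)
  also have "\<dots> = (\<Sum>(e, c)\<in>(SIGMA e:{e. e dvd n}. {c. c dvd n div e}). f e * g c * h (n div (e * c)))"
    by (subst sum.reindex_bij_betw[OF bij_betw_divisor_pairs[OF False], symmetric])
       (use False in \<open>auto intro!: sum.cong\<close>)
  also have "\<dots> = (f \<star> (g \<star> h)) n"
    unfolding dconv_def using False
    by (simp add: sum_distrib_left sum.Sigma fin fin_quot div_mult2_eq mult.assoc)
  finally show ?thesis .
qed simp

lemma dirichlet_delta_0 [simp]: "dirichlet_delta 0 = 0"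
  by (simp add: dirichlet_delta_def)

lemma dconv_dirichlet_delta_right:
  assumes "n > 0"
  shows "(f \<star> dirichlet_delta) n = f n"
proof -
  have "(f \<star> dirichlet_delta) n = (\<Sum>d\<in>{d. d dvd n}. if d = n then f d else 0)"
    unfolding dconv_def dirichlet_delta_def
  proof (rule sum.cong)
    fix d assume "d \<in> {d. d dvd n}"
    then have "n div d = 1 \<longleftrightarrow> d = n"
      using assms by (auto elim!: dvdE)
    then show "f d * (if n div d = 1 then 1 else 0) = (if d = n then f d else 0)"
      by simp
  qed simp
  also have "\<dots> = f n"
    using assms by simp
  finally show ?thesis .
qed

(* Dirichlet convolution at 0 is a junk value (0 has infinitely many divisors), so arithmetic
   functions are normalised to vanish there; this makes the convolution a ring multiplication. *)
typedef arith_fun = "{f :: nat \<Rightarrow> int. f 0 = 0}" morphisms af_nth Abs_arith_fun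
  by (rule exI[of _ "\<lambda>_. 0"]) simp

setup_lifting type_definition_arith_fun

lemma af_nth_0 [simp]: "af_nth f 0 = 0"
  using af_nth[of f] by simp

lemma arith_fun_eqI: "(\<And>n. n > 0 \<Longrightarrow> af_nth f n = af_nth g n) \<Longrightarrow> f = g"
  by (metis af_nth_inject af_nth_0 neq0_conv ext)

instantiation arith_fun :: comm_ring_1
begin

lift_definition zero_arith_fun :: arith_fun is "\<lambda>_. 0" by simp
lift_definition one_arith_fun :: arith_fun is dirichlet_delta by simp
lift_definition plus_arith_fun :: "arith_fun \<Rightarrow> arith_fun \<Rightarrow> arith_fun"
  is "\<lambda>f g n. f n + g n" by simp
lift_definition minus_arith_fun :: "arith_fun \<Rightarrow> arith_fun \<Rightarrow> arith_fun"
  is "\<lambda>f g n. f n - g n" by simp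
lift_definition uminus_arith_fun :: "arith_fun \<Rightarrow> arith_fun" is "\<lambda>f n. - f n" by simp
lift_definition times_arith_fun :: "arith_fun \<Rightarrow> arith_fun \<Rightarrow> arith_fun" is dconv by simp

instance
proof
  fix a b c :: arith_fun
  show "a * b * c = a * (b * c)"
    by transfer (simp add: fun_eq_iff dconv_assoc)
  show "a * b = b * a"
    by transfer (simp add: fun_eq_iff dconv_commute)
  show "1 * a = a"
    by (rule arith_fun_eqI, transfer) (simp add: dconv_commute[of dirichlet_delta] dconv_dirichlet_delta_right)
  show "(a + b) * c = a * c + b * c"
    by transfer (simp add: fun_eq_iff dconv_def ring_distribs sum.distrib)
  show "(0::arith_fun) \<noteq> 1"
    by transfer (metis dirichlet_delta_def zero_neq_one)
qed (transfer; simp add: fun_eq_iff)+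

end

lift_definition af_of :: "(nat \<Rightarrow> int) \<Rightarrow> arith_fun"
  is "\<lambda>f n. if n = 0 then 0 else f n" by simp

lemma af_nth_af_of [simp]: "n > 0 \<Longrightarrow> af_nth (af_of f) n = f n"
  by transfer simp

lemma af_nth_times: "af_nth (f * g) n = (af_nth f \<star> af_nth g) n"
  by transfer simp

lemma af_of_dconv: "af_of (f \<star> g) = af_of f * af_of g"
  by (rule arith_fun_eqI) (auto simp: af_nth_times intro: dconv_cong_pos)

lemma af_of_dirichlet_delta: "af_of dirichlet_delta = 1"
  by (rule arith_fun_eqI, transfer) simp

lemma af_of_dpow: "af_of (dpow f j) = af_of f ^ j"
  by (induction j) (simp_all add: af_of_dirichlet_delta af_of_dconv)

lemma af_nth_diff [simp]: "af_nth (f - g) n = af_nth f n - af_nth g n"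
  by transfer simp

lemma af_nth_sum [simp]: "af_nth (\<Sum>i\<in>I. f i) n = (\<Sum>i\<in>I. af_nth (f i) n)"
  by (induction I rule: infinite_finite_induct) (simp_all add: zero_arith_fun.rep_eq plus_arith_fun.rep_eq)

lemma af_nth_of_int_mult [simp]: "af_nth (of_int c * f) n = c * af_nth f n"
proof -
  have "af_nth (of_nat m * f) n = int m * af_nth f n" for m
    by (induction m) (simp_all add: distrib_right plus_arith_fun.rep_eq zero_arith_fun.rep_eq)
  then show ?thesis
    by (cases c rule: int_cases) (simp_all add: uminus_arith_fun.rep_eq del: of_nat_Suc)
qed

lemma prod_prime_factors_squarefree:
  fixes d :: nat
  assumes "squarefree d"
  shows "\<Prod>(prime_factors d) = d"
proof -
  have "d \<noteq> 0"
    using assms by (metis not_squarefree_0)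
  then have "\<Prod>(prime_factors d) = (\<Prod>p\<in>prime_factors d. p ^ multiplicity p d)"
    using assms by (intro prod.cong) (auto simp: squarefree_factorial_semiring')
  also have "\<dots> = d"
    using \<open>d \<noteq> 0\<close> by (simp add: prod_prime_factors)
  finally show ?thesis .
qed

lemma prime_factors_prod_primes:
  fixes T :: "nat set"
  assumes "finite T" "\<And>p. p \<in> T \<Longrightarrow> prime p"
  shows "prime_factors (\<Prod>T) = T"
proof -
  have "0 \<notin> T"
    using assms(2) not_prime_0 by blast
  then have "prime_factors (prod id T) = \<Union>((prime_factors \<circ> id) ` T)"
    using assms by (intro prime_factors_prod) auto
  also have "\<dots> = T"
    using assms by (auto simp: prime_prime_factors)
  finally show ?thesis by simp
qed

lemma squarefree_divisors_bij_Pow_prime_factors: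
  fixes n :: nat
  assumes "n > 0"
  shows "bij_betw prime_factors {d. d dvd n \<and> squarefree d} (Pow (prime_factors n))"
proof (rule bij_betw_byWitness[where f' = "\<lambda>T. \<Prod>T"])
  show "\<forall>d\<in>{d. d dvd n \<and> squarefree d}. \<Prod>(prime_factors d) = d"
    by (auto intro: prod_prime_factors_squarefree)
  show "\<forall>T\<in>Pow (prime_factors n). prime_factors (\<Prod>T) = T"
    by (auto intro!: prime_factors_prod_primes intro: finite_subset)
  show "prime_factors ` {d. d dvd n \<and> squarefree d} \<subseteq> Pow (prime_factors n)"
    using assms by (auto intro: dvd_trans simp: in_prime_factors_iff)
  show "(\<lambda>T. \<Prod>T) ` Pow (prime_factors n) \<subseteq> {d. d dvd n \<and> squarefree d}"
  proof safe
    fix T assume T: "T \<subseteq> prime_factors n"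
    then have "\<Prod>T dvd (\<Prod>p\<in>T. p ^ multiplicity p n)"
      using assms by (intro prod_dvd_prod) (auto simp: prime_factors_multiplicity)
    also have "\<dots> dvd (\<Prod>p\<in>prime_factors n. p ^ multiplicity p n)"
      using T by (intro prod_dvd_prod_subset) auto
    also have "\<dots> = n"
      using assms by (simp add: prod_prime_factors)
    finally show "\<Prod>T dvd n" .
    have "prime p" if "p \<in> T" for p
      using T that by auto
    then show "squarefree (\<Prod>T)"
      by (intro squarefree_prod_coprime) (auto simp: primes_coprime squarefree_prime)
  qed
qed

lemma sum_moebius_divisors:
  assumes "n > 0"
  shows "(\<Sum>d | d dvd n. moebius d) = dirichlet_delta n"
proof -
  have "(\<Sum>d | d dvd n. moebius d) = (\<Sum>d | d dvd n \<and> squarefree d. (-1) ^ card (prime_factors d))"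
    using assms by (intro sum.mono_neutral_cong_right) (auto simp: moebius_def)
  also have "\<dots> = (\<Sum>T\<in>Pow (prime_factors n). (-1) ^ card T)"
    by (rule sum.reindex_bij_betw[OF squarefree_divisors_bij_Pow_prime_factors[OF assms]])
  also have "\<dots> = (\<Prod>p\<in>prime_factors n. 1 - 1 :: int)"
    by (subst prod_diff_conv_sum) simp_all
  also have "\<dots> = dirichlet_delta n"
    using assms by (auto simp: dirichlet_delta_def prime_factorization_empty_iff card_gt_0_iff)
  finally show ?thesis .
qed

lemma moebius_times_one: "af_of moebius * af_of one_fn = 1"
  unfolding af_of_dconv[symmetric]
  by (rule arith_fun_eqI) (simp add: dconv_def one_fn_def sum_moebius_divisors one_arith_fun.rep_eq)

lemma omega_eq_one_times_prime_ind: "af_of omega_fn = af_of one_fn * af_of prime_ind"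
proof (rule arith_fun_eqI)
  fix n :: nat assume "n > 0"
  have "af_nth (af_of one_fn * af_of prime_ind) n = (prime_ind \<star> one_fn) n"
    using \<open>n > 0\<close> by (simp only: af_of_dconv[symmetric] af_nth_af_of dconv_commute[of one_fn])
  also have "\<dots> = (\<Sum>d | d dvd n. if prime d then 1 else 0)"
    by (simp add: dconv_def prime_ind_def one_fn_def)
  also have "\<dots> = int (card {d. d dvd n \<and> prime d})"
    using \<open>n > 0\<close> by (simp add: sum.If_cases Int_def conj_commute)
  also have "{d. d dvd n \<and> prime d} = prime_factors n"
    using \<open>n > 0\<close> by (auto simp: prime_factors_dvd)
  finally show "af_nth (af_of omega_fn) n = af_nth (af_of one_fn * af_of prime_ind) n"
    using \<open>n > 0\<close> by (simp add: omega_fn_def)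
qed

definition vanishes_upto :: "real \<Rightarrow> arith_fun \<Rightarrow> bool" where
  "vanishes_upto B f \<longleftrightarrow> (\<forall>n. real n \<le> B \<longrightarrow> af_nth f n = 0)"

lemma vanishes_upto_mono: "vanishes_upto B f \<Longrightarrow> B' \<le> B \<Longrightarrow> vanishes_upto B' f"
  by (auto simp: vanishes_upto_def)

lemma vanishes_upto_mult_right:
  assumes "vanishes_upto B f"
  shows "vanishes_upto B (f * g)"
  unfolding vanishes_upto_def
proof (intro allI impI)
  fix n :: nat assume "real n \<le> B"
  show "af_nth (f * g) n = 0"
  proof (cases "n = 0")
    case False
    have "af_nth f d = 0" if "d dvd n" for d
    proof -
      have "real d \<le> real n"
        using that False by (simp add: dvd_imp_le)
      with \<open>real n \<le> B\<close> assms show ?thesis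
        by (simp add: vanishes_upto_def)
    qed
    then show ?thesis
      by (simp add: af_nth_times dconv_def)
  qed simp
qed

lemma vanishes_upto_mult:
  assumes f: "vanishes_upto A f" and g: "vanishes_upto B g" and "B \<ge> 0"
  shows "vanishes_upto (A * B) (f * g)"
  unfolding vanishes_upto_def
proof (intro allI impI)
  fix n :: nat assume n: "real n \<le> A * B"
  have "af_nth f d * af_nth g (n div d) = 0" if "d dvd n" for d
  proof (cases "real d \<le> A")
    case True
    with f show ?thesis by (simp add: vanishes_upto_def)
  next
    case False
    show ?thesis
    proof (cases "d = 0")
      case False
      have "A * B \<le> real d * B"
        using \<open>\<not> real d \<le> A\<close> \<open>B \<ge> 0\<close> by (intro mult_right_mono) auto
      with n have "real n / real d \<le> B"
        using False by (simp add: divide_le_eq mult.commute)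
      then have "real (n div d) \<le> B"
        using that by (simp add: real_of_nat_div)
      with g show ?thesis by (simp add: vanishes_upto_def)
    qed simp
  qed
  then show "af_nth (f * g) n = 0"
    by (simp add: af_nth_times dconv_def sum.neutral)
qed

lemma vanishes_upto_power:
  assumes "vanishes_upto B f" "B \<ge> 0" "k \<ge> 1"
  shows "vanishes_upto (B ^ k) (f ^ k)"
  using \<open>k \<ge> 1\<close>
proof (induction k rule: dec_induct)
  case (step k)
  then show ?case
    using vanishes_upto_mult[OF assms(1) step.IH] \<open>B \<ge> 0\<close> by simp
qed (use assms in simp)

lemma one_minus_one_minus_power:
  fixes a :: "'a :: comm_ring_1"
  shows "1 - (1 - a) ^ k = (\<Sum>j = 1..k. of_int ((-1) ^ (j - 1) * int (k choose j)) * a ^ j)"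
proof -
  have "(1 - a) ^ k = (\<Sum>j\<le>k. of_nat (k choose j) * (- a) ^ j)"
    using binomial_ring[of "- a" 1 k] by simp
  also have "\<dots> = 1 + (\<Sum>j = 1..k. of_nat (k choose j) * (- a) ^ j)"
    unfolding atMost_atLeast0 by (simp add: sum.atLeast_Suc_atMost)
  also have "(\<Sum>j = 1..k. of_nat (k choose j) * (- a) ^ j) =
      - (\<Sum>j = 1..k. of_int ((-1) ^ (j - 1) * int (k choose j)) * a ^ j)"
    unfolding sum_negf[symmetric]
  proof (rule sum.cong)
    fix j assume "j \<in> {1..k}"
    then have "(-1) ^ j = - ((-1) ^ (j - 1) :: 'a)"
      by (cases j) simp_all
    then show "of_nat (k choose j) * (- a) ^ j =
        - (of_int ((-1) ^ (j - 1) * int (k choose j)) * a ^ j)"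
      by (simp add: power_minus[of a j] mult.left_commute)
  qed simp
  finally show ?thesis
    by simp
qed

lemma binomial_sum_truncation:
  fixes l m q p :: "'a :: comm_ring_1"
  assumes "m * q = 1"
  shows "(\<Sum>j = 1..k. of_int ((-1) ^ (j - 1) * int (k choose j)) * (l ^ j * q ^ (j - 1) * (q * p)))
         = p - (m - l) ^ k * (q ^ k * p)"
proof -
  have summand: "c * (l ^ j * q ^ (j - 1) * (q * p)) = c * (l * q) ^ j * p" if "j \<in> {1..k}" for c j
  proof -
    have "q ^ (j - 1) * q = q ^ j"
      using that by (simp add: power_Suc2[symmetric])
    then show ?thesis
      by (metis mult.assoc power_mult_distrib)
  qed
  have "(\<Sum>j = 1..k. of_int ((-1) ^ (j - 1) * int (k choose j)) * (l ^ j * q ^ (j - 1) * (q * p)))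
        = (\<Sum>j = 1..k. of_int ((-1) ^ (j - 1) * int (k choose j)) * (l * q) ^ j) * p"
    unfolding sum_distrib_right by (rule sum.cong[OF refl]) (rule summand)
  also have "\<dots> = (1 - (1 - l * q) ^ k) * p"
    by (simp only: one_minus_one_minus_power)
  also have "1 - l * q = (m - l) * q"
    using assms by (simp add: algebra_simps)
  also have "(1 - ((m - l) * q) ^ k) * p = p - (m - l) ^ k * (q ^ k * p)"
    by (simp only: left_diff_distrib[of 1] mult_1_left power_mult_distrib mult.assoc)
  finally show ?thesis .
qed

lemma sum_binomial_dpow_omega:
  "(\<Sum>j = 1..k. of_int ((-1) ^ (j - 1) * int (k choose j)) *
      af_of ((dpow f j \<star> dpow one_fn (j - 1)) \<star> omega_fn))
   = af_of prime_ind - (af_of moebius - af_of f) ^ k * (af_of one_fn ^ k * af_of prime_ind)"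
  using binomial_sum_truncation[OF moebius_times_one, of k "af_of f" "af_of prime_ind"]
  by (simp only: af_of_dconv af_of_dpow omega_eq_one_times_prime_ind)

lemma vanishes_upto_moebius_tail_power:
  assumes "V \<ge> 0" "k \<ge> 1"
  shows "vanishes_upto (V ^ k) ((af_of moebius - af_of (moebius_le V)) ^ k)"
proof (rule vanishes_upto_power[OF _ assms])
  show "vanishes_upto V (af_of moebius - af_of (moebius_le V))"
    by (simp add: vanishes_upto_def moebius_le_def af_of.rep_eq)
qed

lemma le_power_if_root_le:
  fixes x V :: real
  assumes "x > 0" "k \<ge> 1" "x powr (1 / real k) \<le> V"
  shows "x \<le> V ^ k"
proof -
  have "x = (x powr (1 / real k)) ^ k"
    using assms(1,2) by (simp add: powr_realpow[symmetric] powr_powr)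
  also have "\<dots> \<le> V ^ k"
    using assms(3) by (intro power_mono) auto
  finally show ?thesis .
qed

theorem lemma5p4:
  fixes k n :: nat and x V :: real
  assumes "k \<ge> 1" and "x \<ge> 1" and "V \<ge> x powr (1 / real k)"
    and "n \<ge> 1" and "real n \<le> x"
  shows "prime_ind n =
    (\<Sum>j = 1..k. (-1) ^ (j - 1) * int (k choose j) *
       ((dpow (moebius_le V) j \<star> dpow one_fn (j - 1)) \<star> omega_fn) n)"
proof -
  let ?G = "af_of moebius - af_of (moebius_le V)"
  have "V \<ge> 0"
    using assms(3) powr_ge_zero[of x "1 / real k"] by linarith
  moreover have "x \<le> V ^ k"
    using assms(1-3) by (intro le_power_if_root_le) auto
  ultimately have "vanishes_upto x (?G ^ k * (af_of one_fn ^ k * af_of prime_ind))"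
    using assms(1) by (intro vanishes_upto_mult_right vanishes_upto_mono[OF vanishes_upto_moebius_tail_power])
  then have error_term: "af_nth (?G ^ k * (af_of one_fn ^ k * af_of prime_ind)) n = 0"
    using assms(5) by (simp add: vanishes_upto_def)
  show ?thesis
    using arg_cong[OF sum_binomial_dpow_omega[of k "moebius_le V"], of "\<lambda>f. af_nth f n"] \<open>n \<ge> 1\<close>
    by (simp only: af_nth_sum af_nth_of_int_mult af_nth_diff error_term af_nth_af_of)
qed

end
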